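(* Let $F$ be a field of characteristic zero. The Lie algebra $W^+(1,0)$ is not simple.
   Context: $W^+(1,0)$ is the subalgebra of $W(1,0)$ spanned by $\{e^{ax}x^i\partial: a,i\in\mathbb N\}$ ($\mathbb N$ the nonnegative integers), where elements are vector fields $f\partial$ with $f$ in the algebra with basis $e^{ax}x^i$ (multiplication adding exponents), $\partial(e^{ax}x^i)=ae^{ax}x^i+ie^{ax}x^{i-1}$, and $[f\partial,g\partial]=(f\partial(g)-g\partial(f))\partial$. *)

theory Defs
  imports Main
begin

text \<open>Elements of W^+(1,0) over a field 'a: finitely supported coefficient functions
  f :: nat \<times> nat \<Rightarrow> 'a, where f (a,i) is the coefficient of e^{ax} x^i \<partial>.
  The same functions also represent elements of the function algebra spanned by e^{ax} x^i.\<close>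

definition Wplus :: "(nat \<times> nat \<Rightarrow> 'a::field) set" where
  "Wplus = {f. finite {p. f p \<noteq> 0}}"

text \<open>Product in the function algebra: e^{ax}x^i * e^{bx}x^j = e^{(a+b)x}x^{i+j}.\<close>
definition fmult :: "(nat \<times> nat \<Rightarrow> 'a::field) \<Rightarrow> (nat \<times> nat \<Rightarrow> 'a) \<Rightarrow> nat \<times> nat \<Rightarrow> 'a" where
  "fmult f g = (\<lambda>(c, k). \<Sum>a\<le>c. \<Sum>i\<le>k. f (a, i) * g (c - a, k - i))"

text \<open>\<partial>(e^{ax}x^i) = a e^{ax}x^i + i e^{ax}x^{i-1}.\<close>
definition fderiv :: "(nat \<times> nat \<Rightarrow> 'a::field) \<Rightarrow> nat \<times> nat \<Rightarrow> 'a" where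
  "fderiv f = (\<lambda>(a, i). of_nat a * f (a, i) + of_nat (i + 1) * f (a, i + 1))"

text \<open>[f\<partial>, g\<partial>] = (f \<partial>(g) - g \<partial>(f)) \<partial>.\<close>
definition wbracket :: "(nat \<times> nat \<Rightarrow> 'a::field) \<Rightarrow> (nat \<times> nat \<Rightarrow> 'a) \<Rightarrow> nat \<times> nat \<Rightarrow> 'a" where
  "wbracket f g = (\<lambda>p. fmult f (fderiv g) p - fmult g (fderiv f) p)"

definition Wplus_ideal :: "(nat \<times> nat \<Rightarrow> 'a::field) set \<Rightarrow> bool" where
  "Wplus_ideal I \<longleftrightarrow> I \<subseteq> Wplus \<and> (\<lambda>_. 0) \<in> I
     \<and> (\<forall>f\<in>I. \<forall>g\<in>I. (\<lambda>p. f p + g p) \<in> I)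
     \<and> (\<forall>c. \<forall>f\<in>I. (\<lambda>p. c * f p) \<in> I)
     \<and> (\<forall>f\<in>I. \<forall>g\<in>Wplus. wbracket f g \<in> I)"

definition Wplus_simple :: "'a::field itself \<Rightarrow> bool" where
  "Wplus_simple TYPE('a) \<longleftrightarrow>
     (\<exists>f\<in>(Wplus :: (nat \<times> nat \<Rightarrow> 'a) set). \<exists>g\<in>Wplus. wbracket f g \<noteq> (\<lambda>_. 0))
     \<and> (\<forall>I :: (nat \<times> nat \<Rightarrow> 'a) set. Wplus_ideal I \<longrightarrow> I = {\<lambda>_. 0} \<or> I = Wplus)"

end

theory Submission
  imports Defs
begin

text \<open>The vector fields e^{ax} x^i \<partial> with a \<ge> 1 span a proper nonzero ideal: exponents of
  e^{ax} add under multiplication and are preserved by \<partial>, so in [f\<partial>, g\<partial>] every term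
  inherits a positive exponent from f.  It contains e^x \<partial> but not \<partial>.\<close>

lemma support_fmult_subset:
  fixes f g :: "nat \<times> nat \<Rightarrow> 'a::field"
  shows "{p. fmult f g p \<noteq> 0} \<subseteq>
     (\<lambda>((a, i), (b, j)). (a + b, i + j)) ` ({p. f p \<noteq> 0} \<times> {p. g p \<noteq> 0})"
proof
  fix p assume "p \<in> {p. fmult f g p \<noteq> 0}"
  moreover obtain c k where p: "p = (c, k)" by (cases p)
  ultimately have "(\<Sum>a\<le>c. \<Sum>i\<le>k. f (a, i) * g (c - a, k - i)) \<noteq> 0"
    unfolding fmult_def by simp
  then obtain a where "a \<le> c" "(\<Sum>i\<le>k. f (a, i) * g (c - a, k - i)) \<noteq> 0"
    by (auto elim: sum.not_neutral_contains_not_neutral)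
  then obtain i where "a \<le> c" "i \<le> k" "f (a, i) * g (c - a, k - i) \<noteq> 0"
    by (auto elim: sum.not_neutral_contains_not_neutral)
  then have "((a, i), (c - a, k - i)) \<in> {p. f p \<noteq> 0} \<times> {p. g p \<noteq> 0}"
    and "p = (a + (c - a), i + (k - i))"
    using p by auto
  then show "p \<in> (\<lambda>((a, i), (b, j)). (a + b, i + j)) ` ({p. f p \<noteq> 0} \<times> {p. g p \<noteq> 0})"
    by force
qed

lemma finite_support_fmult:
  assumes "finite {p. f p \<noteq> 0}" "finite {p. g p \<noteq> 0}"
  shows "finite {p. fmult f g p \<noteq> 0}"
  using assms by (blast intro: finite_subset[OF support_fmult_subset])

lemma support_fderiv_subset:
  fixes f :: "nat \<times> nat \<Rightarrow> 'a::field"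
  shows "{p. fderiv f p \<noteq> 0} \<subseteq> {p. f p \<noteq> 0} \<union> (\<lambda>(a, i). (a, i - 1)) ` {p. f p \<noteq> 0}"
proof
  fix p assume "p \<in> {p. fderiv f p \<noteq> 0}"
  moreover obtain a i where p: "p = (a, i)" by (cases p)
  ultimately have "f (a, i) \<noteq> 0 \<or> f (a, i + 1) \<noteq> 0"
    unfolding fderiv_def by auto
  then show "p \<in> {p. f p \<noteq> 0} \<union> (\<lambda>(a, i). (a, i - 1)) ` {p. f p \<noteq> 0}"
    using p by (force intro: rev_image_eqI[of "(a, i + 1)"])
qed

lemma finite_support_fderiv:
  assumes "finite {p. f p \<noteq> 0}"
  shows "finite {p. fderiv f p \<noteq> 0}"
  using assms by (blast intro: finite_subset[OF support_fderiv_subset])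

lemma wbracket_in_Wplus:
  assumes "f \<in> Wplus" "g \<in> Wplus"
  shows "wbracket f g \<in> Wplus"
proof -
  have "finite {p. fmult f (fderiv g) p \<noteq> 0}" "finite {p. fmult g (fderiv f) p \<noteq> 0}"
    using assms by (simp_all add: Wplus_def finite_support_fmult finite_support_fderiv)
  moreover have "{p. wbracket f g p \<noteq> 0} \<subseteq>
      {p. fmult f (fderiv g) p \<noteq> 0} \<union> {p. fmult g (fderiv f) p \<noteq> 0}"
    unfolding wbracket_def by auto
  ultimately show ?thesis
    unfolding Wplus_def by (simp add: finite_subset)
qed

definition Wplus_pos :: "(nat \<times> nat \<Rightarrow> 'a::field) set" where
  "Wplus_pos = {f \<in> Wplus. \<forall>i. f (0, i) = 0}"

lemma fmult_exp_zero:
  assumes "(\<forall>i. f (0, i) = 0) \<or> (\<forall>i. g (0, i) = 0)"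
  shows "fmult f g (0, k) = 0"
  using assms unfolding fmult_def by auto

lemma fderiv_exp_zero:
  assumes "\<forall>i. f (0, i) = 0"
  shows "fderiv f (0, k) = 0"
  using assms unfolding fderiv_def by simp

lemma wbracket_exp_zero:
  assumes "\<forall>i. f (0, i) = 0"
  shows "wbracket f g (0, k) = 0"
  using assms unfolding wbracket_def by (simp add: fmult_exp_zero fderiv_exp_zero)

lemma Wplus_pos_ideal: "Wplus_ideal (Wplus_pos :: (nat \<times> nat \<Rightarrow> 'a::field) set)"
  unfolding Wplus_ideal_def
proof (intro conjI ballI allI)
  show "Wplus_pos \<subseteq> Wplus" "(\<lambda>_. 0) \<in> Wplus_pos"
    unfolding Wplus_pos_def Wplus_def by auto
next
  fix f g :: "nat \<times> nat \<Rightarrow> 'a" assume "f \<in> Wplus_pos" "g \<in> Wplus_pos"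
  then show "(\<lambda>p. f p + g p) \<in> Wplus_pos"
    unfolding Wplus_pos_def Wplus_def
    by (auto intro: finite_subset[of _ "{p. f p \<noteq> 0} \<union> {p. g p \<noteq> 0}"])
next
  fix c and f :: "nat \<times> nat \<Rightarrow> 'a" assume "f \<in> Wplus_pos"
  then show "(\<lambda>p. c * f p) \<in> Wplus_pos"
    unfolding Wplus_pos_def Wplus_def by (auto elim: finite_subset[rotated])
next
  fix f g :: "nat \<times> nat \<Rightarrow> 'a" assume "f \<in> Wplus_pos" "g \<in> Wplus"
  then show "wbracket f g \<in> Wplus_pos"
    unfolding Wplus_pos_def by (simp add: wbracket_in_Wplus wbracket_exp_zero)
qed

lemma Wplus_pos_nonzero: "Wplus_pos \<noteq> {\<lambda>_. 0 :: 'a::field}"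
proof -
  define e :: "nat \<times> nat \<Rightarrow> 'a" where "e = (\<lambda>p. if p = (1, 0) then 1 else 0)"
  have "{p. e p \<noteq> 0} = {(1, 0)}" unfolding e_def by auto
  then have "e \<in> Wplus_pos" unfolding Wplus_pos_def Wplus_def e_def by simp
  moreover have "e \<noteq> (\<lambda>_. 0)" unfolding e_def by (metis one_neq_zero)
  ultimately show ?thesis by blast
qed

lemma Wplus_pos_proper: "Wplus_pos \<noteq> (Wplus :: (nat \<times> nat \<Rightarrow> 'a::field) set)"
proof -
  define e :: "nat \<times> nat \<Rightarrow> 'a" where "e = (\<lambda>p. if p = (0, 0) then 1 else 0)"
  have "{p. e p \<noteq> 0} = {(0, 0)}" unfolding e_def by auto
  then have "e \<in> Wplus" unfolding Wplus_def by simp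
  moreover have "e \<notin> Wplus_pos" unfolding Wplus_pos_def e_def by simp
  ultimately show ?thesis by blast
qed

lemma Wplus_not_simple: "\<not> Wplus_simple TYPE('a::field)"
  unfolding Wplus_simple_def
  using Wplus_pos_ideal Wplus_pos_nonzero Wplus_pos_proper by blast

theorem proposition2:
  shows "\<not> Wplus_simple TYPE('a::field_char_0)"
  by (rule Wplus_not_simple)

end
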